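(* Let $G$ be a finite simple graph with $n$ vertices and minimum degree $\delta \ge 10^6$. Then $$\gamma_s(G) \le \frac{\sqrt{6\ln(\delta+1)} + 1.21}{\sqrt{\delta+1}}\, n.$$
   Context: For a vertex $v$ of $G$, $N[v]$ denotes the closed neighbourhood of $v$ (i.e. $v$ together with its neighbours). A signed domination function of $G$ is a function $f: V(G) \to \{-1, 1\}$ such that $\sum_{x \in N[v]} f(x) \ge 1$ for every vertex $v \in V(G)$. The weight of $f$ is $f(V(G)) = \sum_{v \in V(G)} f(v)$. The signed domination number $\gamma_s(G)$ is the minimum weight of a signed domination function of $G$. *)

theory Defs
  imports Complex_Main
begin

definition simple_graph :: "'a set \<Rightarrow> ('a \<Rightarrow> 'a \<Rightarrow> bool) \<Rightarrow> bool" where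
  "simple_graph V E \<longleftrightarrow> finite V \<and> (\<forall>u v. E u v \<longrightarrow> u \<in> V \<and> v \<in> V)
     \<and> (\<forall>u v. E u v \<longrightarrow> E v u) \<and> (\<forall>v. \<not> E v v)"

definition neighbours :: "'a set \<Rightarrow> ('a \<Rightarrow> 'a \<Rightarrow> bool) \<Rightarrow> 'a \<Rightarrow> 'a set" where
  "neighbours V E v = {u \<in> V. E v u}"

definition closed_nbhd :: "'a set \<Rightarrow> ('a \<Rightarrow> 'a \<Rightarrow> bool) \<Rightarrow> 'a \<Rightarrow> 'a set" where
  "closed_nbhd V E v = insert v (neighbours V E v)"

definition degree :: "'a set \<Rightarrow> ('a \<Rightarrow> 'a \<Rightarrow> bool) \<Rightarrow> 'a \<Rightarrow> nat" where
  "degree V E v = card (neighbours V E v)"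

definition min_degree :: "'a set \<Rightarrow> ('a \<Rightarrow> 'a \<Rightarrow> bool) \<Rightarrow> nat" where
  "min_degree V E = Min (degree V E ` V)"

definition signed_dom_fun :: "'a set \<Rightarrow> ('a \<Rightarrow> 'a \<Rightarrow> bool) \<Rightarrow> ('a \<Rightarrow> int) \<Rightarrow> bool" where
  "signed_dom_fun V E f \<longleftrightarrow> (\<forall>v\<in>V. f v \<in> {-1, 1})
     \<and> (\<forall>v\<in>V. (\<Sum>x\<in>closed_nbhd V E v. f x) \<ge> 1)"

definition signed_dom_number :: "'a set \<Rightarrow> ('a \<Rightarrow> 'a \<Rightarrow> bool) \<Rightarrow> int" where
  "signed_dom_number V E = Min {(\<Sum>v\<in>V. f v) | f. signed_dom_fun V E f}"

end

theory Submission
  imports Defs "HOL-Probability.Probability"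
begin

text \<open>Give every vertex the sign \<open>+1\<close> independently with probability \<open>1/2 + \<epsilon>\<close>, and \<open>-1\<close>
  otherwise. By Hoeffding's inequality a closed neighbourhood \<open>N[v]\<close> has non-positive sum
  with probability at most \<open>exp (-2\<epsilon>\<^sup>2 |N[v]|)\<close>. Switching every such neighbourhood entirely
  to \<open>+1\<close> gives a signed dominating function and costs at most \<open>2 |N[v]|\<close> per neighbourhood,
  so some choice of signs yields weight at most \<open>2\<epsilon>n + \<Sum>\<^sub>v 2 |N[v]| exp (-2\<epsilon>\<^sup>2 |N[v]|)\<close>.
  With \<open>D = \<delta> + 1 \<le> |N[v]|\<close> and \<open>\<epsilon> = \<surd>(6 ln D) / (2 \<surd>D)\<close> every summand is at most
  \<open>2 / D\<^sup>2\<close>, which is below \<open>1.21 / \<surd>D\<close>.\<close>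

definition spin :: "bool \<Rightarrow> int" where
  "spin b = (if b then 1 else -1)"

definition spin_pmf :: "'a set \<Rightarrow> real \<Rightarrow> ('a \<Rightarrow> bool) pmf" where
  "spin_pmf V p = Pi_pmf V False (\<lambda>_. bernoulli_pmf p)"

lemma finite_set_spin_pmf:
  assumes "finite V"
  shows "finite (set_pmf (spin_pmf V p))"
proof (rule finite_subset)
  show "set_pmf (spin_pmf V p) \<subseteq> PiE_dflt V False (set_pmf \<circ> (\<lambda>_. bernoulli_pmf p))"
    unfolding spin_pmf_def by (rule set_Pi_pmf_subset'[OF assms])
  show "finite (PiE_dflt V False (set_pmf \<circ> (\<lambda>_. bernoulli_pmf p)))"
    by (rule finite_PiE_dflt) (use assms in \<open>auto intro: finite_subset[of _ UNIV]\<close>)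
qed

lemma expectation_spin_component:
  assumes "finite V" "i \<in> V" "0 \<le> p" "p \<le> 1"
  shows "measure_pmf.expectation (spin_pmf V p) (\<lambda>\<omega>. real_of_int (spin (\<omega> i))) = 2 * p - 1"
proof -
  have "map_pmf (\<lambda>\<omega>. \<omega> i) (spin_pmf V p) = bernoulli_pmf p"
    using assms(1,2) by (simp add: spin_pmf_def Pi_pmf_component)
  then have "measure_pmf.expectation (spin_pmf V p) (\<lambda>\<omega>. real_of_int (spin (\<omega> i)))
      = measure_pmf.expectation (bernoulli_pmf p) (\<lambda>b. real_of_int (spin b))"
    by (simp flip: \<open>map_pmf (\<lambda>\<omega>. \<omega> i) (spin_pmf V p) = bernoulli_pmf p\<close>)
  also have "\<dots> = 2 * p - 1"
    using assms(3,4) by (simp add: spin_def)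
  finally show ?thesis .
qed

lemma prob_sum_spins_nonpos_le:
  fixes V :: "'a set"
  assumes "finite V" "I \<subseteq> V" "I \<noteq> {}" "0 \<le> \<epsilon>" "\<epsilon> \<le> 1/2"
  shows "measure_pmf.prob (spin_pmf V (1/2 + \<epsilon>)) {\<omega>. (\<Sum>i\<in>I. spin (\<omega> i)) \<le> 0}
           \<le> exp (-2 * \<epsilon>\<^sup>2 * card I)"
proof -
  define P where "P = spin_pmf V (1/2 + \<epsilon>)"
  define X :: "'a \<Rightarrow> ('a \<Rightarrow> bool) \<Rightarrow> real" where "X = (\<lambda>i \<omega>. real_of_int (spin (\<omega> i)))"
  have "finite I"
    using assms(1,2) finite_subset by blast
  have "prob_space.indep_vars (measure_pmf P) (\<lambda>_. count_space UNIV) (\<lambda>i \<omega>. \<omega> i) I"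
    unfolding P_def spin_pmf_def
    by (rule prob_space.indep_vars_subset[OF measure_pmf.prob_space_axioms
          indep_vars_Pi_pmf[OF assms(1)] assms(2)])
  then have indep: "prob_space.indep_vars (measure_pmf P) (\<lambda>_. borel) X I"
    unfolding X_def
    by (rule prob_space.indep_vars_compose2[OF measure_pmf.prob_space_axioms,
          where Y = "\<lambda>_ b. real_of_int (spin b)" and N = "\<lambda>_. borel"]) simp
  have mean: "(\<Sum>i\<in>I. measure_pmf.expectation P (X i)) = 2 * \<epsilon> * card I"
    using assms by (simp add: P_def X_def expectation_spin_component subset_iff)
  interpret Hoeffding_ineq "measure_pmf P" I X "\<lambda>_. -1" "\<lambda>_. 1" "2 * \<epsilon> * card I"
    by unfold_locales (use \<open>finite I\<close> indep mean in \<open>auto simp: X_def spin_def\<close>)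
  have event: "{\<omega>\<in>space (measure_pmf P). (\<Sum>i\<in>I. X i \<omega>) \<le> 2 * \<epsilon> * card I - 2 * \<epsilon> * card I}
      = {\<omega>. (\<Sum>i\<in>I. spin (\<omega> i)) \<le> 0}"
    by (auto simp: X_def simp flip: of_int_sum)
  have "measure_pmf.prob P {\<omega>. (\<Sum>i\<in>I. spin (\<omega> i)) \<le> 0}
      \<le> exp (-2 * (2 * \<epsilon> * card I)\<^sup>2 / (\<Sum>i\<in>I. (1 - (-1::real))\<^sup>2))"
    unfolding event[symmetric] by (rule Hoeffding_ineq_le) (use assms \<open>finite I\<close> in auto)
  also have "\<dots> = exp (-2 * \<epsilon>\<^sup>2 * card I)"
    using \<open>finite I\<close> assms(3) by (simp add: power2_eq_square)
  finally show ?thesis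
    by (simp only: P_def)
qed

definition deficient :: "'a set \<Rightarrow> ('a \<Rightarrow> 'a set) \<Rightarrow> ('a \<Rightarrow> bool) \<Rightarrow> 'a set" where
  "deficient V N \<omega> = {w \<in> V. (\<Sum>i\<in>N w. spin (\<omega> i)) \<le> 0}"

definition repair :: "'a set \<Rightarrow> ('a \<Rightarrow> 'a set) \<Rightarrow> ('a \<Rightarrow> bool) \<Rightarrow> 'a \<Rightarrow> int" where
  "repair V N \<omega> u = (if \<exists>w\<in>deficient V N \<omega>. u \<in> N w then 1 else spin (\<omega> u))"

lemma repair_cases: "repair V N \<omega> u \<in> {-1, 1}"
  by (simp add: repair_def spin_def)

lemma sum_repair_ge_1:
  assumes "v \<in> V" "finite (N v)" "v \<in> N v"
  shows "(\<Sum>u\<in>N v. repair V N \<omega> u) \<ge> 1"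
proof (cases "v \<in> deficient V N \<omega>")
  case True
  then have "(\<Sum>u\<in>N v. repair V N \<omega> u) = (\<Sum>u\<in>N v. 1)"
    by (intro sum.cong) (auto simp: repair_def)
  moreover have "card (N v) \<ge> 1"
    using assms(2,3) by (metis One_nat_def Suc_leI card_gt_0_iff empty_iff)
  ultimately show ?thesis by simp
next
  case False
  have "(\<Sum>u\<in>N v. spin (\<omega> u)) \<le> (\<Sum>u\<in>N v. repair V N \<omega> u)"
    by (intro sum_mono) (simp add: repair_def spin_def)
  then show ?thesis
    using False assms(1) by (auto simp: deficient_def)
qed

lemma sum_repair_le:
  assumes "finite V" "\<And>w. w \<in> V \<Longrightarrow> N w \<subseteq> V"
  shows "(\<Sum>u\<in>V. repair V N \<omega> u)
     \<le> (\<Sum>u\<in>V. spin (\<omega> u)) + 2 * (\<Sum>w\<in>deficient V N \<omega>. int (card (N w)))"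
proof -
  let ?D = "deficient V N \<omega>"
  have "finite ?D"
    using assms(1) by (simp add: deficient_def)
  have pointwise: "repair V N \<omega> u \<le> spin (\<omega> u) + 2 * (\<Sum>w\<in>?D. of_bool (u \<in> N w))" for u
  proof (cases "\<exists>w\<in>?D. u \<in> N w")
    case True
    then obtain w where "w \<in> ?D" "u \<in> N w" by blast
    then have "1 \<le> (\<Sum>w\<in>?D. of_bool (u \<in> N w) :: int)"
      using member_le_sum[of w ?D "\<lambda>w. of_bool (u \<in> N w) :: int"] \<open>finite ?D\<close> by auto
    then show ?thesis
      by (simp add: repair_def spin_def)
  next
    case False
    then show ?thesis
      by (simp add: repair_def sum_nonneg)
  qed
  have count: "(\<Sum>u\<in>V. of_bool (u \<in> N w)) = int (card (N w))" if "w \<in> ?D" for w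
  proof -
    have "V \<inter> {u. u \<in> N w} = N w"
      using assms(2) that by (auto simp: deficient_def)
    then show ?thesis
      using assms(1) by simp
  qed
  have "(\<Sum>u\<in>V. repair V N \<omega> u) \<le> (\<Sum>u\<in>V. spin (\<omega> u) + 2 * (\<Sum>w\<in>?D. of_bool (u \<in> N w)))"
    by (intro sum_mono pointwise)
  also have "\<dots> = (\<Sum>u\<in>V. spin (\<omega> u)) + 2 * (\<Sum>w\<in>?D. \<Sum>u\<in>V. of_bool (u \<in> N w))"
    by (simp add: sum.distrib sum_distrib_left sum.swap[of _ V])
  also have "\<dots> = (\<Sum>u\<in>V. spin (\<omega> u)) + 2 * (\<Sum>w\<in>?D. int (card (N w)))"
    using count by simp
  finally show ?thesis .
qed

lemma exists_le_expectation:
  fixes f :: "'a \<Rightarrow> real"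
  assumes "integrable (measure_pmf p) f"
  shows "\<exists>x. f x \<le> measure_pmf.expectation p f"
proof (rule ccontr)
  assume "\<nexists>x. f x \<le> measure_pmf.expectation p f"
  then have "measure_pmf.expectation p (\<lambda>_. measure_pmf.expectation p f)
      < measure_pmf.expectation p f"
    by (intro measure_pmf.integral_less_AE_space assms) (auto simp: not_le)
  then show False
    by simp
qed

lemma exists_spins_deficiency_le:
  fixes V :: "'a set" and N :: "'a \<Rightarrow> 'a set" and \<epsilon> :: real
  assumes "finite V" "\<And>w. w \<in> V \<Longrightarrow> N w \<subseteq> V \<and> N w \<noteq> {}" "0 \<le> \<epsilon>" "\<epsilon> \<le> 1/2"
  shows "\<exists>\<omega>. real_of_int (\<Sum>u\<in>V. spin (\<omega> u)) + 2 * (\<Sum>w\<in>deficient V N \<omega>. real (card (N w)))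
           \<le> 2 * \<epsilon> * card V + (\<Sum>w\<in>V. 2 * real (card (N w)) * exp (-2 * \<epsilon>\<^sup>2 * card (N w)))"
proof -
  define P where "P = spin_pmf V (1/2 + \<epsilon>)"
  define B where "B w = {\<omega>. (\<Sum>i\<in>N w. spin (\<omega> i)) \<le> 0}" for w
  define h where "h = (\<lambda>\<omega>. (\<Sum>u\<in>V. real_of_int (spin (\<omega> u)))
      + (\<Sum>w\<in>V. 2 * real (card (N w)) * indicator (B w) \<omega>))"
  have integrable: "integrable (measure_pmf P) f" for f :: "_ \<Rightarrow> real"
    unfolding P_def by (intro integrable_measure_pmf_finite finite_set_spin_pmf assms(1))
  have "measure_pmf.expectation P h
      = (\<Sum>u\<in>V. measure_pmf.expectation P (\<lambda>\<omega>. real_of_int (spin (\<omega> u))))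
        + (\<Sum>w\<in>V. measure_pmf.expectation P (\<lambda>\<omega>. 2 * real (card (N w)) * indicator (B w) \<omega>))"
    unfolding h_def
    by (simp only: Bochner_Integration.integral_add Bochner_Integration.integral_sum integrable)
  also have "\<dots> = 2 * \<epsilon> * card V + (\<Sum>w\<in>V. 2 * real (card (N w)) * measure_pmf.prob P (B w))"
    using assms(1,3,4) by (simp add: P_def expectation_spin_component)
  also have "\<dots> \<le> 2 * \<epsilon> * card V + (\<Sum>w\<in>V. 2 * real (card (N w)) * exp (-2 * \<epsilon>\<^sup>2 * card (N w)))"
    unfolding P_def B_def
    by (intro add_left_mono sum_mono mult_left_mono prob_sum_spins_nonpos_le) (use assms in auto)
  finally have expectation_le: "measure_pmf.expectation P h \<le> \<dots>" .
  obtain \<omega> where "h \<omega> \<le> measure_pmf.expectation P h"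
    using exists_le_expectation[OF integrable] by blast
  then have "h \<omega> \<le> 2 * \<epsilon> * card V + (\<Sum>w\<in>V. 2 * real (card (N w)) * exp (-2 * \<epsilon>\<^sup>2 * card (N w)))"
    using expectation_le by (rule order_trans)
  moreover have "h \<omega> = real_of_int (\<Sum>u\<in>V. spin (\<omega> u))
      + 2 * (\<Sum>w\<in>deficient V N \<omega>. real (card (N w)))"
    using assms(1)
    by (simp add: h_def B_def deficient_def indicator_def sum_distrib_left Int_def
        flip: of_int_sum)
  ultimately show ?thesis
    by (intro exI[of _ \<omega>]) simp
qed

lemma card_closed_nbhd:
  assumes "simple_graph V E"
  shows "card (closed_nbhd V E v) = Defs.degree V E v + 1"
proof -
  have "finite (neighbours V E v)" "v \<notin> neighbours V E v"
    using assms by (auto simp: simple_graph_def neighbours_def)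
  then show ?thesis
    by (simp add: closed_nbhd_def Defs.degree_def)
qed

lemma closed_nbhd_subset:
  assumes "simple_graph V E" "v \<in> V"
  shows "closed_nbhd V E v \<subseteq> V"
  using assms by (auto simp: closed_nbhd_def neighbours_def)

lemma min_degree_le_degree:
  assumes "finite V" "v \<in> V"
  shows "min_degree V E \<le> Defs.degree V E v"
  using assms by (simp add: min_degree_def)

lemma signed_dom_number_le:
  assumes "finite V" "signed_dom_fun V E f"
  shows "signed_dom_number V E \<le> (\<Sum>v\<in>V. f v)"
proof -
  have weights: "{(\<Sum>v\<in>V. g v) | g. signed_dom_fun V E g} \<subseteq> {- int (card V) .. int (card V)}"
  proof clarify
    fix g assume "signed_dom_fun V E g"
    then have "\<bar>g v\<bar> \<le> 1" if "v \<in> V" for v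
      using that by (auto simp: signed_dom_fun_def)
    then have "\<bar>\<Sum>v\<in>V. g v\<bar> \<le> int (card V)"
      using order_trans[OF sum_abs sum_mono[of V "\<lambda>v. \<bar>g v\<bar>" "\<lambda>_. 1"]] by simp
    then show "(\<Sum>v\<in>V. g v) \<in> {- int (card V) .. int (card V)}"
      by auto
  qed
  show ?thesis
    unfolding signed_dom_number_def
    by (rule Min_le[OF finite_subset[OF weights]]) (use assms(2) in auto)
qed

lemma signed_dom_fun_repair:
  assumes "simple_graph V E"
  shows "signed_dom_fun V E (repair V (closed_nbhd V E) \<omega>)"
  unfolding signed_dom_fun_def
proof (intro conjI ballI)
  fix v assume "v \<in> V"
  show "repair V (closed_nbhd V E) \<omega> v \<in> {-1, 1}"
    by (rule repair_cases)
  have "finite (closed_nbhd V E v)"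
    using assms \<open>v \<in> V\<close> closed_nbhd_subset finite_subset by (metis simple_graph_def)
  then show "1 \<le> (\<Sum>x\<in>closed_nbhd V E v. repair V (closed_nbhd V E) \<omega> x)"
    using \<open>v \<in> V\<close> by (intro sum_repair_ge_1) (auto simp: closed_nbhd_def)
qed

lemma signed_dom_number_le_random_bound:
  fixes \<epsilon> :: real
  assumes "simple_graph V E" "0 \<le> \<epsilon>" "\<epsilon> \<le> 1/2"
  shows "real_of_int (signed_dom_number V E) \<le> 2 * \<epsilon> * card V
    + (\<Sum>v\<in>V. 2 * real (card (closed_nbhd V E v)) * exp (-2 * \<epsilon>\<^sup>2 * card (closed_nbhd V E v)))"
proof -
  let ?N = "closed_nbhd V E"
  have "finite V"
    using assms(1) by (simp add: simple_graph_def)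
  have N: "?N w \<subseteq> V \<and> ?N w \<noteq> {}" if "w \<in> V" for w
    using closed_nbhd_subset[OF assms(1) that] by (auto simp: closed_nbhd_def)
  obtain \<omega> where \<omega>: "real_of_int (\<Sum>u\<in>V. spin (\<omega> u)) + 2 * (\<Sum>w\<in>deficient V ?N \<omega>. real (card (?N w)))
      \<le> 2 * \<epsilon> * card V + (\<Sum>w\<in>V. 2 * real (card (?N w)) * exp (-2 * \<epsilon>\<^sup>2 * card (?N w)))"
    using exists_spins_deficiency_le[of V ?N \<epsilon>, OF \<open>finite V\<close> N assms(2,3)] by blast
  have "signed_dom_number V E \<le> (\<Sum>u\<in>V. repair V ?N \<omega> u)"
    by (intro signed_dom_number_le \<open>finite V\<close> signed_dom_fun_repair assms(1))
  also have "\<dots> \<le> (\<Sum>u\<in>V. spin (\<omega> u)) + 2 * (\<Sum>w\<in>deficient V ?N \<omega>. int (card (?N w)))"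
    using N by (intro sum_repair_le \<open>finite V\<close>) auto
  finally have "real_of_int (signed_dom_number V E)
      \<le> real_of_int ((\<Sum>u\<in>V. spin (\<omega> u)) + 2 * (\<Sum>w\<in>deficient V ?N \<omega>. int (card (?N w))))"
    by (simp only: of_int_le_iff)
  then show ?thesis
    using \<omega> by simp
qed

text \<open>With \<open>m = t D\<close>, the left-hand side is \<open>D\<^sup>-\<^sup>2 t exp (-3 ln D (t - 1))\<close>, and
  \<open>t \<le> 1 + 3 ln D (t - 1) \<le> exp (3 ln D (t - 1))\<close> because \<open>ln D \<ge> 1\<close>.\<close>

lemma mult_exp_neg_ln_le:
  fixes D m :: real
  assumes "3 \<le> D" "D \<le> m"
  shows "m * exp (-(3 * ln D / D) * m) \<le> 1 / D\<^sup>2"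
proof -
  define t where "t = m / D"
  define a where "a = 3 * ln D * (t - 1)"
  have "D > 0" "t \<ge> 1" "m = D * t"
    using assms by (auto simp: t_def)
  have "1 \<le> ln D"
    using assms(1) exp_le ln_ge_iff[of D 1] by linarith
  then have "t \<le> 1 + a"
    using \<open>t \<ge> 1\<close> mult_right_mono[of 1 "3 * ln D" "t - 1"] by (simp add: a_def)
  also have "\<dots> \<le> exp a"
    by (rule exp_ge_add_one_self)
  finally have "t \<le> exp a" .
  have "-(3 * ln D / D) * m = -a - 3 * ln D"
    using \<open>D > 0\<close> \<open>m = D * t\<close> by (simp add: a_def field_simps)
  moreover have "exp (3 * ln D) = D ^ 3"
    using \<open>D > 0\<close> exp_of_nat_mult[of 3 "ln D"] by simp
  ultimately have "exp (-(3 * ln D / D) * m) = exp (-a) / D ^ 3"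
    by (simp add: exp_diff)
  then have "m * exp (-(3 * ln D / D) * m) = (t * exp (-a)) / D\<^sup>2"
    using \<open>D > 0\<close> \<open>m = D * t\<close> by (simp add: power2_eq_square power3_eq_cube)
  also have "\<dots> \<le> 1 / D\<^sup>2"
    using \<open>t \<le> exp a\<close> by (intro divide_right_mono) (simp_all add: exp_minus field_simps)
  finally show ?thesis .
qed

lemma signed_dom_number_le_min_degree:
  assumes "simple_graph V E"
    and D: "D = real (min_degree V E) + 1" "3 \<le> D" "6 * ln D \<le> D"
  shows "real_of_int (signed_dom_number V E) \<le> (sqrt (6 * ln D) / sqrt D + 2 / D\<^sup>2) * card V"
proof -
  define \<epsilon> where "\<epsilon> = sqrt (6 * ln D) / (2 * sqrt D)"
  have "0 < D" "0 \<le> ln D"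
    using D(2) by auto
  have "0 \<le> \<epsilon>"
    unfolding \<epsilon>_def by (intro divide_nonneg_nonneg) (use \<open>0 \<le> ln D\<close> \<open>0 < D\<close> in auto)
  have "\<epsilon> \<le> 1/2"
    using real_sqrt_le_mono[OF D(3)] \<open>0 < D\<close> by (simp add: \<epsilon>_def divide_simps)
  have "2 * \<epsilon>\<^sup>2 = 3 * ln D / D"
    using \<open>0 < D\<close> \<open>0 \<le> ln D\<close> by (simp add: \<epsilon>_def power_divide power_mult_distrib)
  have term_le: "2 * real (card (closed_nbhd V E v)) * exp (-2 * \<epsilon>\<^sup>2 * card (closed_nbhd V E v)) \<le> 2 / D\<^sup>2"
    if "v \<in> V" for v
  proof -
    have "finite V"
      using assms(1) by (simp add: simple_graph_def)
    then have "D \<le> card (closed_nbhd V E v)"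
      using min_degree_le_degree[OF _ that] card_closed_nbhd[OF assms(1)] D(1) by simp
    moreover have "-2 * \<epsilon>\<^sup>2 = -(3 * ln D / D)"
      using \<open>2 * \<epsilon>\<^sup>2 = 3 * ln D / D\<close> by simp
    ultimately have "card (closed_nbhd V E v) * exp (-2 * \<epsilon>\<^sup>2 * card (closed_nbhd V E v)) \<le> 1 / D\<^sup>2"
      using mult_exp_neg_ln_le[OF D(2)] by (simp only:)
    then show ?thesis
      by linarith
  qed
  have "real_of_int (signed_dom_number V E) \<le> 2 * \<epsilon> * card V
      + (\<Sum>v\<in>V. 2 * real (card (closed_nbhd V E v)) * exp (-2 * \<epsilon>\<^sup>2 * card (closed_nbhd V E v)))"
    by (rule signed_dom_number_le_random_bound) fact+
  also have "\<dots> \<le> 2 * \<epsilon> * card V + card V * (2 / D\<^sup>2)"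
    using sum_mono[OF term_le] by simp
  also have "\<dots> = (sqrt (6 * ln D) / sqrt D + 2 / D\<^sup>2) * card V"
    by (simp add: \<epsilon>_def algebra_simps)
  finally show ?thesis .
qed

lemma six_ln_le_self:
  fixes D :: real
  assumes "144 \<le> D"
  shows "6 * ln D \<le> D"
proof -
  have "12 \<le> sqrt D"
    using real_sqrt_le_mono[OF assms] by simp
  have "ln D = 2 * ln (sqrt D)"
    using assms by (simp add: ln_sqrt)
  also have "\<dots> \<le> 2 * sqrt D"
    using ln_le_minus_one[of "sqrt D"] assms by simp
  finally have "6 * ln D \<le> 12 * sqrt D"
    by simp
  also have "\<dots> \<le> sqrt D * sqrt D"
    using \<open>12 \<le> sqrt D\<close> assms by (intro mult_right_mono) auto
  also have "\<dots> = D"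
    using assms by simp
  finally show ?thesis .
qed

lemma two_div_square_le:
  fixes D :: real
  assumes "2 \<le> D"
  shows "2 / D\<^sup>2 \<le> 1.21 / sqrt D"
proof -
  have "sqrt D \<le> D"
    using assms real_sqrt_le_mono[of D "D * D"] by (simp add: real_sqrt_mult_self)
  then have "2 * sqrt D \<le> 2 * D"
    by simp
  also have "2 * D \<le> 1.21 * D * D"
    using assms mult_right_mono[of 2 "1.21 * D" D] by simp
  finally have "2 * sqrt D \<le> 1.21 * D\<^sup>2"
    by (simp add: power2_eq_square)
  then show ?thesis
    using assms by (simp add: field_simps)
qed

theorem theorem5:
  fixes V :: "'a set" and E :: "'a \<Rightarrow> 'a \<Rightarrow> bool"
  assumes "simple_graph V E" and "V \<noteq> {}"
    and "min_degree V E \<ge> 10^6"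
  shows "real_of_int (signed_dom_number V E)
     \<le> (sqrt (6 * ln (real (min_degree V E) + 1)) + 1.21)
         / sqrt (real (min_degree V E) + 1) * real (card V)"
proof -
  define D where "D = real (min_degree V E) + 1"
  have "10^6 \<le> D"
    using assms(3) by (simp add: D_def)
  then have "real_of_int (signed_dom_number V E) \<le> (sqrt (6 * ln D) / sqrt D + 2 / D\<^sup>2) * card V"
    by (intro signed_dom_number_le_min_degree assms(1) D_def six_ln_le_self) auto
  also have "\<dots> \<le> (sqrt (6 * ln D) / sqrt D + 1.21 / sqrt D) * card V"
    using two_div_square_le[of D] \<open>10^6 \<le> D\<close> by (intro mult_right_mono) auto
  finally show ?thesis
    by (simp add: D_def add_divide_distrib)
qed

end
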